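(* Let $\mathcal K$ be the set of all continuous functions $k:\mathbb R\to[0,\infty)$ with $\int_{\mathbb R}k(x)\,dx=1$ such that there is a constant $\lambda>0$ with $\int_{\mathbb R}k(x)e^{\lambda|x|}\,dx<+\infty$. For $k\in\mathcal K$ define \[ E(k)=\operatorname{sign}(J(k))\Big[1-\inf_{\lambda\in\mathbb R}\int_{\mathbb R}k(x)e^{\lambda x}\,dx\Big],\qquad J(k)=\int_{\mathbb R}k(x)\,x\,dx . \] Then: (i) $E(k)=-E(\check k)$ for every $k\in\mathcal K$, where $\check k(x)=k(-x)$ for $x\in\mathbb R$; (ii) if $k_1,k_2\in\mathcal K$ and $k_1$ is more skewed to the right than $k_2$, i.e. $k_1(x)\geqslant k_2(x)$ for all $x>0$ and $k_1(x)\leqslant k_2(x)$ for all $x<0$, then $E(k_1)\geqslant E(k_2)$.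
   Context: $\operatorname{sign}$ denotes the sign function with $\operatorname{sign}(0)=0$. The integral $\int_{\mathbb R}k(x)e^{\lambda x}dx$ may equal $+\infty$ for some $\lambda$; the infimum is taken in $[0,+\infty]$. *)

theory Defs
  imports "HOL-Analysis.Analysis"
begin

definition kernel_class :: "(real \<Rightarrow> real) set" where
  "kernel_class = {k. continuous_on UNIV k \<and> (\<forall>x. 0 \<le> k x) \<and>
     (\<integral>\<^sup>+ x. ennreal (k x) \<partial>lborel) = 1 \<and>
     (\<exists>l>0. (\<integral>\<^sup>+ x. ennreal (k x * exp (l * \<bar>x\<bar>)) \<partial>lborel) < \<infinity>)}"

definition J_mean :: "(real \<Rightarrow> real) \<Rightarrow> real" where
  "J_mean k = (\<integral> x. k x * x \<partial>lborel)"

definition mgf :: "(real \<Rightarrow> real) \<Rightarrow> real \<Rightarrow> ennreal" where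
  "mgf k l = (\<integral>\<^sup>+ x. ennreal (k x * exp (l * x)) \<partial>lborel)"

text \<open>E(k) = sign(J(k)) (1 - inf over lambda of mgf). The infimum is taken in
  [0, +infinity]; it is at most mgf k 0 = 1, hence finite for k in K.\<close>
definition E_skew :: "(real \<Rightarrow> real) \<Rightarrow> real" where
  "E_skew k = sgn (J_mean k) * (1 - enn2real (INF l. mgf k l))"

end

theory Submission
  imports Defs
begin

text \<open>
  The reflection \<open>x \<mapsto> -x\<close> negates \<open>J\<close> and turns \<open>mgf k \<lambda>\<close> into \<open>mgf k (-\<lambda>)\<close>, so it
  keeps the infimum and flips the sign of \<open>E\<close>; this is (i).
  For (ii), \<open>(k\<^sub>1 x - k\<^sub>2 x) (exp (\<lambda> x) - 1) \<le> 0\<close> for \<open>\<lambda> \<le> 0\<close>, so \<open>mgf k\<^sub>1 \<le> mgf k\<^sub>2\<close> on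
  \<open>\<lambda> \<le> 0\<close>; and \<open>J(k\<^sub>1) \<ge> J(k\<^sub>2)\<close>. If \<open>J(k\<^sub>2) \<ge> 0\<close>, then \<open>exp (\<lambda> x) \<ge> 1 + \<lambda> x\<close> gives
  \<open>mgf k\<^sub>2 \<lambda> \<ge> 1\<close> for \<open>\<lambda> \<ge> 0\<close>, while the infimum for \<open>k\<^sub>1\<close> is at most \<open>mgf k\<^sub>1 0 = 1\<close>;
  so the infimum for \<open>k\<^sub>1\<close> is the smaller one. The case \<open>J(k\<^sub>1) < 0\<close> reduces to this
  one by reflection, and if \<open>J(k\<^sub>2) \<le> 0 \<le> J(k\<^sub>1)\<close> the signs of \<open>E\<close> already decide.
\<close>

definition more_right_skewed :: "(real \<Rightarrow> real) \<Rightarrow> (real \<Rightarrow> real) \<Rightarrow> bool" where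
  "more_right_skewed k1 k2 \<longleftrightarrow> (\<forall>x>0. k2 x \<le> k1 x) \<and> (\<forall>x<0. k1 x \<le> k2 x)"

lemma more_right_skewed_reflect:
  "more_right_skewed k1 k2 \<Longrightarrow> more_right_skewed (\<lambda>x. k2 (- x)) (\<lambda>x. k1 (- x))"
  by (simp add: more_right_skewed_def)

lemma nn_integral_lborel_reflect:
  fixes f :: "real \<Rightarrow> ennreal"
  assumes "f \<in> borel_measurable borel"
  shows "(\<integral>\<^sup>+x. f (- x) \<partial>lborel) = (\<integral>\<^sup>+x. f x \<partial>lborel)"
  using nn_integral_real_affine[OF assms, of "-1" 0] by simp

lemma integral_lborel_reflect:
  fixes f :: "real \<Rightarrow> 'a::{banach, second_countable_topology}"
  shows "(\<integral>x. f (- x) \<partial>lborel) = (\<integral>x. f x \<partial>lborel)"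
  using lborel_integral_real_affine[of "-1" f 0] by simp

lemma integrable_first_moment_if_exp_moment:
  fixes k :: "real \<Rightarrow> real"
  assumes [measurable]: "k \<in> borel_measurable borel"
    and nonneg: "\<And>x. 0 \<le> k x" and "l > 0"
    and exp_moment: "(\<integral>\<^sup>+x. ennreal (k x * exp (l * \<bar>x\<bar>)) \<partial>lborel) < \<infinity>"
  shows "integrable lborel (\<lambda>x. k x * x)"
proof (rule integrableI_bounded)
  have "ennreal (norm (k x * x)) \<le> ennreal (1 / l) * ennreal (k x * exp (l * \<bar>x\<bar>))" for x
  proof -
    have "l * \<bar>x\<bar> \<le> exp (l * \<bar>x\<bar>)"
      using exp_ge_add_one_self[of "l * \<bar>x\<bar>"] by linarith
    then have "k x * \<bar>x\<bar> \<le> k x * (exp (l * \<bar>x\<bar>) / l)"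
      using \<open>l > 0\<close> nonneg by (intro mult_left_mono) (simp_all add: field_simps)
    then show ?thesis
      using nonneg[of x] \<open>l > 0\<close>
      by (subst ennreal_mult[symmetric]) (auto simp: abs_mult intro!: ennreal_leI)
  qed
  then have "(\<integral>\<^sup>+x. ennreal (norm (k x * x)) \<partial>lborel)
      \<le> ennreal (1 / l) * (\<integral>\<^sup>+x. ennreal (k x * exp (l * \<bar>x\<bar>)) \<partial>lborel)"
    by (subst nn_integral_cmult[symmetric]) (auto intro: nn_integral_mono)
  also have "\<dots> < \<infinity>"
    using exp_moment by (simp add: ennreal_mult_less_top)
  finally show "(\<integral>\<^sup>+x. ennreal (norm (k x * x)) \<partial>lborel) < \<infinity>" .
qed simp

lemma kernel_class_borel_measurable:
  "k \<in> kernel_class \<Longrightarrow> k \<in> borel_measurable borel"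
  by (auto simp: kernel_class_def intro: borel_measurable_continuous_onI)

lemma kernel_class_nonneg: "k \<in> kernel_class \<Longrightarrow> 0 \<le> k x"
  by (simp add: kernel_class_def)

lemma kernel_class_nn_integral: "k \<in> kernel_class \<Longrightarrow> (\<integral>\<^sup>+x. ennreal (k x) \<partial>lborel) = 1"
  by (simp add: kernel_class_def)

lemma kernel_class_integrable: "k \<in> kernel_class \<Longrightarrow> integrable lborel k"
  using kernel_class_borel_measurable kernel_class_nonneg kernel_class_nn_integral
  by (intro integrableI_nn_integral_finite[where x=1]) auto

lemma kernel_class_integral: "k \<in> kernel_class \<Longrightarrow> (\<integral>x. k x \<partial>lborel) = 1"
  using nn_integral_eq_integral[OF kernel_class_integrable]
    kernel_class_nonneg kernel_class_nn_integral integral_nonneg_AE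
  by (metis AE_I2 ennreal_1 ennreal_inj zero_le_one)

lemma kernel_class_integrable_first_moment:
  assumes k: "k \<in> kernel_class"
  shows "integrable lborel (\<lambda>x. k x * x)"
proof -
  obtain l where "l > 0" and "(\<integral>\<^sup>+x. ennreal (k x * exp (l * \<bar>x\<bar>)) \<partial>lborel) < \<infinity>"
    using k by (auto simp: kernel_class_def)
  then show ?thesis
    using integrable_first_moment_if_exp_moment kernel_class_borel_measurable kernel_class_nonneg k
    by blast
qed

lemma kernel_class_reflect:
  assumes k: "k \<in> kernel_class"
  shows "(\<lambda>x. k (- x)) \<in> kernel_class"
proof -
  note [measurable] = kernel_class_borel_measurable[OF k]
  obtain l where "l > 0" and "(\<integral>\<^sup>+x. ennreal (k x * exp (l * \<bar>x\<bar>)) \<partial>lborel) < \<infinity>"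
    using k by (auto simp: kernel_class_def)
  moreover have "continuous_on UNIV (\<lambda>x. k (- x))"
  proof (rule continuous_on_compose2[of UNIV k])
    show "continuous_on UNIV k" using k by (simp add: kernel_class_def)
  qed (auto intro: continuous_intros)
  ultimately show ?thesis
    using k nn_integral_lborel_reflect[of "\<lambda>x. ennreal (k x)"]
      nn_integral_lborel_reflect[of "\<lambda>x. ennreal (k x * exp (l * \<bar>x\<bar>))"]
    by (auto simp: kernel_class_def)
qed

lemma J_mean_reflect: "J_mean (\<lambda>x. k (- x)) = - J_mean k"
  using integral_lborel_reflect[of "\<lambda>x. k x * x"] by (simp add: J_mean_def)

lemma mgf_reflect:
  "k \<in> kernel_class \<Longrightarrow> mgf (\<lambda>x. k (- x)) l = mgf k (- l)"
  using nn_integral_lborel_reflect[of "\<lambda>x. ennreal (k x * exp (- l * x))"]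
    kernel_class_borel_measurable
  by (simp add: mgf_def)

lemma INF_mgf_reflect:
  assumes "k \<in> kernel_class"
  shows "(INF l. mgf (\<lambda>x. k (- x)) l) = (INF l. mgf k l)"
proof -
  have "(INF l. mgf (\<lambda>x. k (- x)) l) = Inf (mgf k ` uminus ` UNIV)"
    by (simp only: mgf_reflect[OF assms] image_image)
  then show ?thesis by simp
qed

lemma E_skew_reflect:
  "k \<in> kernel_class \<Longrightarrow> E_skew (\<lambda>x. k (- x)) = - E_skew k"
  by (simp add: E_skew_def J_mean_reflect INF_mgf_reflect sgn_minus)

lemma mgf_zero: "k \<in> kernel_class \<Longrightarrow> mgf k 0 = 1"
  by (simp add: mgf_def kernel_class_def)

lemma INF_mgf_le_one: "k \<in> kernel_class \<Longrightarrow> (INF l. mgf k l) \<le> 1"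
  by (metis INF_lower2 UNIV_I mgf_zero order_refl)

lemma enn2real_INF_mgf_le_one: "k \<in> kernel_class \<Longrightarrow> enn2real (INF l. mgf k l) \<le> 1"
  using enn2real_mono[OF INF_mgf_le_one] by simp

lemma one_le_mgf:
  assumes k: "k \<in> kernel_class" and "0 \<le> l * J_mean k"
  shows "1 \<le> mgf k l"
proof (cases "mgf k l = \<infinity>")
  case False
  note [measurable] = kernel_class_borel_measurable[OF k]
  have nonneg: "0 \<le> k x * exp (l * x)" for x
    using kernel_class_nonneg[OF k] by simp
  have integrable: "integrable lborel (\<lambda>x. k x * exp (l * x))"
    using False nonneg
    by (intro integrableI_nn_integral_finite[where x="enn2real (mgf k l)"])
       (auto simp: mgf_def less_top)
  have "1 \<le> 1 + l * J_mean k"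
    using assms(2) by simp
  also have "\<dots> = (\<integral>x. k x + l * (k x * x) \<partial>lborel)"
    using kernel_class_integrable[OF k] kernel_class_integrable_first_moment[OF k]
    by (simp add: J_mean_def kernel_class_integral[OF k])
  also have "\<dots> \<le> (\<integral>x. k x * exp (l * x) \<partial>lborel)"
  proof (rule integral_mono[OF _ integrable])
    show "integrable lborel (\<lambda>x. k x + l * (k x * x))"
      using kernel_class_integrable[OF k] kernel_class_integrable_first_moment[OF k] by simp
    show "k x + l * (k x * x) \<le> k x * exp (l * x)" for x
      using mult_left_mono[OF exp_ge_add_one_self[of "l * x"] kernel_class_nonneg[OF k, of x]]
      by (simp add: algebra_simps)
  qed
  finally have "ennreal 1 \<le> ennreal (\<integral>x. k x * exp (l * x) \<partial>lborel)"
    by (rule ennreal_leI)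
  also have "\<dots> = mgf k l"
    unfolding mgf_def using nonneg by (intro nn_integral_eq_integral[symmetric] integrable) auto
  finally show ?thesis by simp
qed simp

lemma J_mean_le_if_more_right_skewed:
  assumes "k1 \<in> kernel_class" "k2 \<in> kernel_class" and "more_right_skewed k1 k2"
  shows "J_mean k2 \<le> J_mean k1"
  unfolding J_mean_def
proof (rule integral_mono[OF kernel_class_integrable_first_moment kernel_class_integrable_first_moment])
  show "k2 x * x \<le> k1 x * x" for x
    using assms(3) unfolding more_right_skewed_def
    by (cases x "0::real" rule: linorder_cases) (auto intro: mult_right_mono mult_right_mono_neg)
qed (use assms in auto)

lemma mgf_le_if_more_right_skewed:
  assumes k1: "k1 \<in> kernel_class" and k2: "k2 \<in> kernel_class"
    and skew: "more_right_skewed k1 k2" and "l \<le> 0"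
  shows "mgf k1 l \<le> mgf k2 l"
proof -
  note [measurable] = kernel_class_borel_measurable[OF k1] kernel_class_borel_measurable[OF k2]
  have pointwise: "k1 x * exp (l * x) + k2 x \<le> k2 x * exp (l * x) + k1 x" for x
  proof -
    have "(k1 x - k2 x) * (exp (l * x) - 1) \<le> 0"
    proof (cases x "0::real" rule: linorder_cases)
      case less
      then have "k1 x \<le> k2 x" "0 \<le> l * x"
        using skew \<open>l \<le> 0\<close> by (auto simp: more_right_skewed_def mult_nonpos_nonpos)
      then show ?thesis by (auto intro: mult_nonpos_nonneg)
    next
      case greater
      then have "k2 x \<le> k1 x" "l * x \<le> 0"
        using skew \<open>l \<le> 0\<close> by (auto simp: more_right_skewed_def mult_nonpos_nonneg)
      then show ?thesis by (auto intro: mult_nonneg_nonpos)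
    qed simp
    then show ?thesis by (simp add: algebra_simps)
  qed
  have "1 + mgf k1 l = (\<integral>\<^sup>+x. ennreal (k1 x * exp (l * x)) + ennreal (k2 x) \<partial>lborel)"
    using k1 k2 by (simp add: nn_integral_add mgf_def kernel_class_nn_integral kernel_class_nonneg add.commute)
  also have "\<dots> \<le> (\<integral>\<^sup>+x. ennreal (k2 x * exp (l * x)) + ennreal (k1 x) \<partial>lborel)"
    using pointwise k1 k2
    by (intro nn_integral_mono) (simp add: kernel_class_nonneg flip: ennreal_plus)
  also have "\<dots> = 1 + mgf k2 l"
    using k1 k2 by (simp add: nn_integral_add mgf_def kernel_class_nn_integral kernel_class_nonneg add.commute)
  finally show ?thesis by (simp add: ennreal_add_left_cancel_le)
qed

lemma INF_mgf_le_if_more_right_skewed: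
  assumes k1: "k1 \<in> kernel_class" and k2: "k2 \<in> kernel_class"
    and skew: "more_right_skewed k1 k2" and "0 \<le> J_mean k2"
  shows "(INF l. mgf k1 l) \<le> (INF l. mgf k2 l)"
proof (rule INF_greatest)
  fix l :: real
  show "(INF l. mgf k1 l) \<le> mgf k2 l"
  proof (cases "l \<le> 0")
    case True
    then show ?thesis
      using mgf_le_if_more_right_skewed[OF k1 k2 skew] by (metis INF_lower2 UNIV_I)
  next
    case False
    then have "1 \<le> mgf k2 l"
      using \<open>0 \<le> J_mean k2\<close> by (intro one_le_mgf[OF k2]) simp
    then show ?thesis
      using INF_mgf_le_one[OF k1] by order
  qed
qed

lemma E_skew_nonneg: "k \<in> kernel_class \<Longrightarrow> 0 \<le> J_mean k \<Longrightarrow> 0 \<le> E_skew k"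
  using enn2real_INF_mgf_le_one by (simp add: E_skew_def)

lemma E_skew_nonpos: "k \<in> kernel_class \<Longrightarrow> J_mean k \<le> 0 \<Longrightarrow> E_skew k \<le> 0"
  using enn2real_INF_mgf_le_one by (simp add: E_skew_def mult_nonpos_nonneg)

lemma E_skew_le_if_more_right_skewed_J_pos:
  assumes k1: "k1 \<in> kernel_class" and k2: "k2 \<in> kernel_class"
    and skew: "more_right_skewed k1 k2" and "0 < J_mean k2"
  shows "E_skew k2 \<le> E_skew k1"
proof -
  have "(INF l. mgf k1 l) \<le> (INF l. mgf k2 l)"
    using assms by (intro INF_mgf_le_if_more_right_skewed) auto
  then have "enn2real (INF l. mgf k1 l) \<le> enn2real (INF l. mgf k2 l)"
    using INF_mgf_le_one[OF k2] by (intro enn2real_mono) (auto simp: order_le_less_trans)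
  moreover have "0 < J_mean k1"
    using J_mean_le_if_more_right_skewed[OF assms(1-3)] \<open>0 < J_mean k2\<close> by linarith
  ultimately show ?thesis
    using \<open>0 < J_mean k2\<close> by (simp add: E_skew_def)
qed

theorem proposition2p1:
  shows "(\<forall>k\<in>kernel_class. E_skew k = - E_skew (\<lambda>x. k (- x))) \<and>
         (\<forall>k1\<in>kernel_class. \<forall>k2\<in>kernel_class.
           (\<forall>x>0. k1 x \<ge> k2 x) \<longrightarrow> (\<forall>x<0. k1 x \<le> k2 x) \<longrightarrow>
           E_skew k1 \<ge> E_skew k2)"
proof (intro conjI ballI impI)
  show "E_skew k = - E_skew (\<lambda>x. k (- x))" if "k \<in> kernel_class" for k
    using E_skew_reflect[OF that] by simp
next
  fix k1 k2
  assume k1: "k1 \<in> kernel_class" and k2: "k2 \<in> kernel_class"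
    and "\<forall>x>0. k1 x \<ge> k2 x" "\<forall>x<0. k1 x \<le> k2 x"
  then have skew: "more_right_skewed k1 k2"
    by (simp add: more_right_skewed_def)
  consider "J_mean k2 \<le> 0" "0 \<le> J_mean k1" | "0 < J_mean k2" | "J_mean k1 < 0"
    by linarith
  then show "E_skew k2 \<le> E_skew k1"
  proof cases
    case 1
    then show ?thesis using E_skew_nonpos[OF k2] E_skew_nonneg[OF k1] by linarith
  next
    case 2
    then show ?thesis using E_skew_le_if_more_right_skewed_J_pos[OF k1 k2 skew] by simp
  next
    case 3
    then have "E_skew (\<lambda>x. k1 (- x)) \<le> E_skew (\<lambda>x. k2 (- x))"
      using k1 k2 more_right_skewed_reflect[OF skew]
      by (intro E_skew_le_if_more_right_skewed_J_pos kernel_class_reflect) (auto simp: J_mean_reflect)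
    then show ?thesis using E_skew_reflect k1 k2 by simp
  qed
qed

end
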